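(* Let $n\ge 2$, let $2\le k\le n$, and let $\alpha_k,\alpha_{k+1},\ldots,\alpha_n\in\mathbb{C}$. Let $\mathbf{A}$ and $\mathbf{B}$ be two cyclic Leibniz algebras over $\mathbb{C}$ of dimension $n$. Assume $\mathbf{A}$ has a cyclic generator $a$ satisfying $$aa^n=\alpha_k a^k+\alpha_{k+1}a^{k+1}+\cdots+\alpha_n a^n.$$ Then $\mathbf{A}$ is isomorphic to $\mathbf{B}$ (as algebras) if and only if $\mathbf{B}$ has a cyclic generator $b$ satisfying $$bb^n=\alpha_k b^k+\alpha_{k+1}b^{k+1}+\cdots+\alpha_n b^n.$$
   Context: A (left) Leibniz algebra is a vector space with a bilinear product such that left multiplication by every element is a derivation: $x(yz)=(xy)z+y(xz)$ for all $x,y,z$. A cyclic Leibniz algebra is a Leibniz algebra generated (as an algebra) by a single element. For an element $x$ one sets $x^1=x$ and $x^{j+1}=x\,x^j$ (left multiplication by $x$ applied $j$ times to $x$). An element $x$ of an $n$-dimensional cyclic Leibniz algebra is called a cyclic generator (or generator) if $\{x,x^2,\ldots,x^n\}$ is a basis of the algebra. *)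

theory Defs
  imports Complex_Main
begin

definition leibniz_algebra :: "(complex \<Rightarrow> 'a::ab_group_add \<Rightarrow> 'a) \<Rightarrow> ('a \<Rightarrow> 'a \<Rightarrow> 'a) \<Rightarrow> bool" where
  "leibniz_algebra sc m \<longleftrightarrow>
     vector_space sc \<and>
     (\<forall>x. Vector_Spaces.linear sc sc (m x)) \<and>
     (\<forall>y. Vector_Spaces.linear sc sc (\<lambda>x. m x y)) \<and>
     (\<forall>x y z. m x (m y z) = m (m x y) z + m y (m x z))"

definition cyclic_algebra :: "(complex \<Rightarrow> 'a::ab_group_add \<Rightarrow> 'a) \<Rightarrow> ('a \<Rightarrow> 'a \<Rightarrow> 'a) \<Rightarrow> bool" where
  "cyclic_algebra sc m \<longleftrightarrow>
     (\<exists>x. \<forall>S. module.subspace sc S \<and> (\<forall>u\<in>S. \<forall>v\<in>S. m u v \<in> S) \<and> x \<in> S \<longrightarrow> S = UNIV)"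

text \<open>lpow m x j = x^(j+1) in the paper's notation: x^1 = x, x^(j+1) = x x^j.\<close>
primrec lpow :: "('a \<Rightarrow> 'a \<Rightarrow> 'a) \<Rightarrow> 'a \<Rightarrow> nat \<Rightarrow> 'a" where
  "lpow m x 0 = x"
| "lpow m x (Suc j) = m x (lpow m x j)"

definition cyclic_generator :: "(complex \<Rightarrow> 'a::ab_group_add \<Rightarrow> 'a) \<Rightarrow> ('a \<Rightarrow> 'a \<Rightarrow> 'a) \<Rightarrow> nat \<Rightarrow> 'a \<Rightarrow> bool" where
  "cyclic_generator sc m n x \<longleftrightarrow>
     inj_on (lpow m x) {..<n} \<and>
     \<not> module.dependent sc (lpow m x ` {..<n}) \<and>
     module.span sc (lpow m x ` {..<n}) = UNIV"

definition algebra_iso :: "(complex \<Rightarrow> 'a::ab_group_add \<Rightarrow> 'a) \<Rightarrow> ('a \<Rightarrow> 'a \<Rightarrow> 'a) \<Rightarrow>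
    (complex \<Rightarrow> 'b::ab_group_add \<Rightarrow> 'b) \<Rightarrow> ('b \<Rightarrow> 'b \<Rightarrow> 'b) \<Rightarrow> bool" where
  "algebra_iso scA mA scB mB \<longleftrightarrow>
     (\<exists>f. bij f \<and> Vector_Spaces.linear scA scB f \<and> (\<forall>x y. f (mA x y) = mB (f x) (f y)))"

end

theory Submission
  imports Defs
begin

text \<open>An isomorphism carries a cyclic generator and its relation to a cyclic generator
  satisfying the same relation. Conversely, given generators \<open>a\<close>, \<open>b\<close> with the same
  relation, the linear bijection \<open>a\<^sup>i \<mapsto> b\<^sup>i\<close> is multiplicative: it intertwines left
  multiplication by \<open>a\<close> and by \<open>b\<close> (the relation handles \<open>a a\<^sup>n\<close>), and in a left Leibniz
  algebra left multiplication by every power \<open>x\<^sup>j\<close> with \<open>j \<ge> 2\<close> vanishes, so left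
  multiplication by the basis is determined by left multiplication by the generator.\<close>

lemma leibniz_mult_lpow_Suc_left:
  assumes "leibniz_algebra sc m"
  shows "m (lpow m x (Suc j)) z = 0"
proof -
  have lin: "\<And>x. Vector_Spaces.linear sc sc (m x)"
    and jacobi: "\<And>x y z. m x (m y z) = m (m x y) z + m y (m x z)"
    using assms unfolding leibniz_algebra_def by blast+
  have leibniz: "m (m x y) z = m x (m y z) - m y (m x z)" for x y z
    using jacobi[of x y z] by (simp add: eq_diff_eq)
  have mult_0_right: "m x 0 = 0" for x
  proof -
    interpret Vector_Spaces.linear sc sc "m x" by (rule lin)
    show ?thesis by (rule zero)
  qed
  show ?thesis
  proof (induction j arbitrary: z)
    case 0
    show ?case using leibniz[of x x z] by simp
  next
    case (Suc j)
    show ?case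
      using leibniz[of x "lpow m x (Suc j)" z] Suc.IH mult_0_right by simp
  qed
qed

lemma lpow_hom:
  assumes "\<And>x y. f (mA x y) = mB (f x) (f y)"
  shows "lpow mB (f a) j = f (lpow mA a j)"
  by (induction j) (simp_all add: assms)

lemma linear_eq_if_eq_on_lpow:
  assumes "vector_space scA" "vector_space scB"
    and "Vector_Spaces.linear scA scB g" "Vector_Spaces.linear scA scB h"
    and "module.span scA (lpow m a ` {..<n}) = UNIV"
    and "\<And>j. j < n \<Longrightarrow> g (lpow m a j) = h (lpow m a j)"
  shows "g x = h x"
proof -
  interpret vector_space_pair scA scB
    using assms(1,2) by (simp add: vector_space_pair_def)
  show ?thesis
    by (rule linear_eq_on[OF assms(3,4), of x "lpow m a ` {..<n}"]) (use assms(5,6) in auto)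
qed

lemma cyclic_generator_iso_image:
  assumes "vector_space scA" "vector_space scB"
    and "bij f" "Vector_Spaces.linear scA scB f" "\<And>x y. f (mA x y) = mB (f x) (f y)"
    and "cyclic_generator scA mA n a"
  shows "cyclic_generator scB mB n (f a)"
proof -
  interpret vector_space_pair scA scB
    using assms(1,2) by (simp add: vector_space_pair_def)
  have inj: "inj f" using assms(3) by (simp add: bij_def)
  have lpow_f: "lpow mB (f a) = f \<circ> lpow mA a"
    by (rule ext) (simp add: lpow_hom[of f mA mB, OF assms(5)])
  have image: "lpow mB (f a) ` {..<n} = f ` lpow mA a ` {..<n}"
    unfolding lpow_f by (rule image_comp[symmetric])
  have gen: "inj_on (lpow mA a) {..<n}" "\<not> vs1.dependent (lpow mA a ` {..<n})"
    "vs1.span (lpow mA a ` {..<n}) = UNIV"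
    using assms(6) unfolding cyclic_generator_def by auto
  show ?thesis
    unfolding cyclic_generator_def
  proof (intro conjI)
    show "inj_on (lpow mB (f a)) {..<n}"
      unfolding lpow_f by (rule comp_inj_on[OF gen(1) inj_on_subset[OF inj subset_UNIV]])
    show "\<not> vs2.dependent (lpow mB (f a) ` {..<n})"
      unfolding image
      by (rule linear_independent_injective_image[OF assms(4) gen(2)])
        (rule inj_on_subset[OF inj subset_UNIV])
    show "vs2.span (lpow mB (f a) ` {..<n}) = UNIV"
      unfolding image linear_span_image[OF assms(4)] gen(3)
      using assms(3) by (simp add: bij_is_surj)
  qed
qed

lemma linear_bij_map_of_bases:
  assumes "vector_space scA" "vector_space scB"
    and "inj_on u {..<n}" "\<not> module.dependent scA (u ` {..<n})"
      "module.span scA (u ` {..<n}) = UNIV"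
    and "inj_on v {..<n}" "\<not> module.dependent scB (v ` {..<n})"
      "module.span scB (v ` {..<n}) = UNIV"
  obtains f where "bij f" "Vector_Spaces.linear scA scB f" "\<And>i. i < n \<Longrightarrow> f (u i) = v i"
proof -
  interpret AB: vector_space_pair scA scB
    using assms(1,2) by (simp add: vector_space_pair_def)
  interpret BA: vector_space_pair scB scA
    using assms(1,2) by (simp add: vector_space_pair_def)
  interpret AA: vector_space_pair scA scA
    using assms(1) by (simp add: vector_space_pair_def)
  interpret BB: vector_space_pair scB scB
    using assms(2) by (simp add: vector_space_pair_def)
  define f where "f = AB.construct (u ` {..<n}) (\<lambda>w. v (inv_into {..<n} u w))"
  define g where "g = BA.construct (v ` {..<n}) (\<lambda>w. u (inv_into {..<n} v w))"
  have f_linear: "Vector_Spaces.linear scA scB f"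
    unfolding f_def by (rule AB.linear_construct) (rule assms(4))
  have g_linear: "Vector_Spaces.linear scB scA g"
    unfolding g_def by (rule BA.linear_construct) (rule assms(7))
  have f_basis: "f (u i) = v i" if "i < n" for i
    unfolding f_def using that assms(3,4) by (subst AB.construct_basis) auto
  have g_basis: "g (v i) = u i" if "i < n" for i
    unfolding g_def using that assms(6,7) by (subst BA.construct_basis) auto
  have "(g \<circ> f) x = id x" for x
    by (rule AA.linear_eq_on[OF Vector_Spaces.linear_compose[OF f_linear g_linear]
          vector_space.linear_id[OF assms(1)], of x "u ` {..<n}"])
      (auto simp: assms(5) f_basis g_basis)
  moreover have "(f \<circ> g) y = id y" for y
    by (rule BB.linear_eq_on[OF Vector_Spaces.linear_compose[OF g_linear f_linear]
          vector_space.linear_id[OF assms(2)], of y "v ` {..<n}"])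
      (auto simp: assms(8) f_basis g_basis)
  ultimately have "bij f"
    by (metis bijI' comp_apply id_apply)
  then show thesis using f_linear f_basis by (rule that)
qed

lemma lpow_generator_map_is_hom:
  fixes \<alpha> :: "nat \<Rightarrow> complex"
  assumes "leibniz_algebra scA mA" "leibniz_algebra scB mB"
    and "module.span scA (lpow mA a ` {..<n}) = UNIV"
    and "mA a (lpow mA a (n - 1)) = (\<Sum>i = k..n. scA (\<alpha> i) (lpow mA a (i - 1)))"
    and "mB b (lpow mB b (n - 1)) = (\<Sum>i = k..n. scB (\<alpha> i) (lpow mB b (i - 1)))"
    and f_linear: "Vector_Spaces.linear scA scB f"
    and f_lpow: "\<And>i. i < n \<Longrightarrow> f (lpow mA a i) = lpow mB b i"
  shows "f (mA x y) = mB (f x) (f y)"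
proof -
  have vs: "vector_space scA" "vector_space scB"
    and linA: "\<And>x. Vector_Spaces.linear scA scA (mA x)"
    and linA': "\<And>y. Vector_Spaces.linear scA scA (\<lambda>x. mA x y)"
    and linB: "\<And>x. Vector_Spaces.linear scB scB (mB x)"
    and linB': "\<And>y. Vector_Spaces.linear scB scB (\<lambda>x. mB x y)"
    using assms(1,2) unfolding leibniz_algebra_def by blast+
  interpret vector_space_pair scA scB using vs by (simp add: vector_space_pair_def)
  have intertwines_generator: "f (mA a z) = mB b (f z)" for z
  proof (rule linear_eq_if_eq_on_lpow[OF vs _ _ assms(3),
        where g = "\<lambda>z. f (mA a z)" and h = "\<lambda>z. mB b (f z)"])
    show "Vector_Spaces.linear scA scB (\<lambda>z. f (mA a z))"
      using Vector_Spaces.linear_compose[OF linA f_linear] by (simp add: o_def)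
    show "Vector_Spaces.linear scA scB (\<lambda>z. mB b (f z))"
      using Vector_Spaces.linear_compose[OF f_linear linB] by (simp add: o_def)
  next
    fix j assume j: "j < n"
    show "f (mA a (lpow mA a j)) = mB b (f (lpow mA a j))"
    proof (cases "Suc j < n")
      case True
      then show ?thesis using j f_lpow[of "Suc j"] f_lpow[of j] by simp
    next
      case False
      then have top: "j = n - 1" using j by simp
      have "f (mA a (lpow mA a j)) = (\<Sum>i = k..n. scB (\<alpha> i) (f (lpow mA a (i - 1))))"
        unfolding top assms(4) by (simp add: linear_sum[OF f_linear] linear_scale[OF f_linear])
      also have "\<dots> = (\<Sum>i = k..n. scB (\<alpha> i) (lpow mB b (i - 1)))"
        using j by (intro sum.cong refl) (subst f_lpow, auto)
      also have "\<dots> = mB b (f (lpow mA a j))"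
        unfolding assms(5)[symmetric] top using j f_lpow[of "n - 1"] by simp
      finally show ?thesis .
    qed
  qed
  show ?thesis
  proof (rule linear_eq_if_eq_on_lpow[OF vs _ _ assms(3),
        where g = "\<lambda>x. f (mA x y)" and h = "\<lambda>x. mB (f x) (f y)"])
    show "Vector_Spaces.linear scA scB (\<lambda>x. f (mA x y))"
      using Vector_Spaces.linear_compose[OF linA' f_linear] by (simp add: o_def)
    show "Vector_Spaces.linear scA scB (\<lambda>x. mB (f x) (f y))"
      using Vector_Spaces.linear_compose[OF f_linear linB'] by (simp add: o_def)
  next
    fix j assume "j < n"
    then show "f (mA (lpow mA a j) y) = mB (f (lpow mA a j)) (f y)"
      using f_lpow[of j] intertwines_generator
        leibniz_mult_lpow_Suc_left[OF assms(1)] leibniz_mult_lpow_Suc_left[OF assms(2)]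
        linear_0[OF f_linear]
      by (cases j) simp_all
  qed
qed

lemma lpow_relation_hom_image:
  fixes \<alpha> :: "nat \<Rightarrow> complex"
  assumes "vector_space scA" "vector_space scB"
    and "Vector_Spaces.linear scA scB f" "\<And>x y. f (mA x y) = mB (f x) (f y)"
    and "mA a (lpow mA a (n - 1)) = (\<Sum>i = k..n. scA (\<alpha> i) (lpow mA a (i - 1)))"
  shows "mB (f a) (lpow mB (f a) (n - 1)) = (\<Sum>i = k..n. scB (\<alpha> i) (lpow mB (f a) (i - 1)))"
proof -
  interpret vector_space_pair scA scB
    using assms(1,2) by (simp add: vector_space_pair_def)
  show ?thesis
    unfolding lpow_hom[of f mA mB, OF assms(4)] assms(4)[symmetric] assms(5)
    by (simp add: linear_sum[OF assms(3)] linear_scale[OF assms(3)])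
qed

lemma algebra_iso_if_generators_same_relation:
  fixes \<alpha> :: "nat \<Rightarrow> complex"
  assumes "leibniz_algebra scA mA" "leibniz_algebra scB mB"
    and "cyclic_generator scA mA n a" "cyclic_generator scB mB n b"
    and "mA a (lpow mA a (n - 1)) = (\<Sum>i = k..n. scA (\<alpha> i) (lpow mA a (i - 1)))"
    and "mB b (lpow mB b (n - 1)) = (\<Sum>i = k..n. scB (\<alpha> i) (lpow mB b (i - 1)))"
  shows "algebra_iso scA mA scB mB"
proof -
  have vs: "vector_space scA" "vector_space scB"
    using assms(1,2) unfolding leibniz_algebra_def by blast+
  have gen_a: "inj_on (lpow mA a) {..<n}" "\<not> module.dependent scA (lpow mA a ` {..<n})"
      "module.span scA (lpow mA a ` {..<n}) = UNIV"
    and gen_b: "inj_on (lpow mB b) {..<n}" "\<not> module.dependent scB (lpow mB b ` {..<n})"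
      "module.span scB (lpow mB b ` {..<n}) = UNIV"
    using assms(3,4) unfolding cyclic_generator_def by auto
  obtain f where f: "bij f" "Vector_Spaces.linear scA scB f"
    "\<And>i. i < n \<Longrightarrow> f (lpow mA a i) = lpow mB b i"
    using linear_bij_map_of_bases[OF vs gen_a gen_b] by blast
  have "f (mA x y) = mB (f x) (f y)" for x y
    by (rule lpow_generator_map_is_hom[OF assms(1,2) gen_a(3) assms(5,6) f(2,3)])
  with f show ?thesis unfolding algebra_iso_def by blast
qed

theorem lemma3p1:
  fixes scA :: "complex \<Rightarrow> 'a::ab_group_add \<Rightarrow> 'a" and mA :: "'a \<Rightarrow> 'a \<Rightarrow> 'a"
    and scB :: "complex \<Rightarrow> 'b::ab_group_add \<Rightarrow> 'b" and mB :: "'b \<Rightarrow> 'b \<Rightarrow> 'b"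
    and n k :: nat and \<alpha> :: "nat \<Rightarrow> complex" and a :: 'a
  assumes "n \<ge> 2" and "2 \<le> k" and "k \<le> n"
    and "leibniz_algebra scA mA" and "cyclic_algebra scA mA" and "vector_space.dim scA UNIV = n"
    and "leibniz_algebra scB mB" and "cyclic_algebra scB mB" and "vector_space.dim scB UNIV = n"
    and "cyclic_generator scA mA n a"
    and "mA a (lpow mA a (n - 1)) = (\<Sum>i = k..n. scA (\<alpha> i) (lpow mA a (i - 1)))"
  shows "algebra_iso scA mA scB mB \<longleftrightarrow>
    (\<exists>b. cyclic_generator scB mB n b \<and>
         mB b (lpow mB b (n - 1)) = (\<Sum>i = k..n. scB (\<alpha> i) (lpow mB b (i - 1))))"
proof
  have vs: "vector_space scA" "vector_space scB"
    using assms(4,7) unfolding leibniz_algebra_def by blast+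
  assume "algebra_iso scA mA scB mB"
  then obtain f where f: "bij f" "Vector_Spaces.linear scA scB f"
    "\<And>x y. f (mA x y) = mB (f x) (f y)" unfolding algebra_iso_def by blast
  show "\<exists>b. cyclic_generator scB mB n b \<and>
      mB b (lpow mB b (n - 1)) = (\<Sum>i = k..n. scB (\<alpha> i) (lpow mB b (i - 1)))"
    using cyclic_generator_iso_image[OF vs f assms(10)]
      lpow_relation_hom_image[OF vs f(2,3) assms(11)] by blast
next
  assume "\<exists>b. cyclic_generator scB mB n b \<and>
      mB b (lpow mB b (n - 1)) = (\<Sum>i = k..n. scB (\<alpha> i) (lpow mB b (i - 1)))"
  then show "algebra_iso scA mA scB mB"
    using algebra_iso_if_generators_same_relation[OF assms(4,7,10) _ assms(11)] by blast
qed

end
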